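(* Let $H$ and $\tilde H$ be equivalent dephased $d\times d$ complex Hadamard matrices. Then $\eta_c(H)=\eta_c(\tilde H)$, $\eta_r(H)=\eta_r(\tilde H)$, $\eta_{\bar c}(H)=\eta_{\bar c}(\tilde H)$ and $\eta_{\bar r}(H)=\eta_{\bar r}(\tilde H)$.
   Context: A $d\times d$ complex Hadamard matrix has unimodular entries and pairwise orthogonal columns; it is dephased if its first row and first column consist of $1$'s. Two complex Hadamard matrices $H_1,H_2$ are equivalent if $H_2=D_1P_1H_1P_2D_2$ with $D_1,D_2$ diagonal unitary and $P_1,P_2$ permutation matrices. Two distinct columns $C_A,C_B$ form an ER pair if $\overline{(C_A)_j}(C_B)_j\in\{1,-1\}$ for every $j$; ER pairs of rows are defined analogously. Two ER pairs of columns $\{C_1,C_2\}$ and $\{C_3,C_4\}$ are aligned if $\overline{(C_1)_k}(C_2)_k=\overline{(C_3)_k}(C_4)_k$ for every $k$ (analogously for rows). $\eta_c(H)$ (resp. $\eta_r(H)$) is the maximal number of pairwise disjoint ER pairs of columns (resp. rows) of $H$, and $\eta_{\bar c}(H)$ (resp. $\eta_{\bar r}(H)$) is the maximal number of pairwise disjoint ER pairs of columns (resp. rows) of $H$ that are mutually aligned. *)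

theory Defs
  imports "HOL-Analysis.Analysis"
begin

text \<open>A d x d complex matrix is represented as a function H :: nat => nat => complex,
  where H i j is the entry in row i and column j, for i, j < d (indices 0..d-1).\<close>

type_synonym cmat = "nat \<Rightarrow> nat \<Rightarrow> complex"

definition transp_mat :: "cmat \<Rightarrow> cmat" where
  "transp_mat H = (\<lambda>i j. H j i)"

definition complex_hadamard :: "nat \<Rightarrow> cmat \<Rightarrow> bool" where
  "complex_hadamard d H \<longleftrightarrow>
     (\<forall>i<d. \<forall>j<d. cmod (H i j) = 1) \<and>
     (\<forall>a<d. \<forall>b<d. a \<noteq> b \<longrightarrow> (\<Sum>k<d. cnj (H k a) * H k b) = 0)"

definition dephased :: "nat \<Rightarrow> cmat \<Rightarrow> bool" where
  "dephased d H \<longleftrightarrow> (\<forall>j<d. H 0 j = 1) \<and> (\<forall>i<d. H i 0 = 1)"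

text \<open>H2 = D1 P1 H1 P2 D2 with D1, D2 diagonal unitary (unimodular diagonal entries)
  and P1, P2 permutation matrices.\<close>
definition hadamard_equiv :: "nat \<Rightarrow> cmat \<Rightarrow> cmat \<Rightarrow> bool" where
  "hadamard_equiv d H1 H2 \<longleftrightarrow>
     (\<exists>u v :: nat \<Rightarrow> complex. \<exists>p q :: nat \<Rightarrow> nat.
        (\<forall>i<d. cmod (u i) = 1) \<and> (\<forall>j<d. cmod (v j) = 1) \<and>
        p permutes {..<d} \<and> q permutes {..<d} \<and>
        (\<forall>i<d. \<forall>j<d. H2 i j = u i * H1 (p i) (q j) * v j))"

definition ER_cols :: "nat \<Rightarrow> cmat \<Rightarrow> nat \<Rightarrow> nat \<Rightarrow> bool" where
  "ER_cols d H a b \<longleftrightarrow> a < d \<and> b < d \<and> a \<noteq> b \<and>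
     (\<forall>j<d. cnj (H j a) * H j b \<in> {1, -1})"

definition aligned_cols :: "nat \<Rightarrow> cmat \<Rightarrow> nat \<times> nat \<Rightarrow> nat \<times> nat \<Rightarrow> bool" where
  "aligned_cols d H p r \<longleftrightarrow>
     (\<forall>k<d. cnj (H k (fst p)) * H k (snd p) = cnj (H k (fst r)) * H k (snd r))"

text \<open>A family of pairwise disjoint ER pairs of columns; each pair is recorded
  as an ordered pair (a,b) (both orientations are allowed; disjointness forbids duplicates).\<close>
definition disjoint_ER_col_family :: "nat \<Rightarrow> cmat \<Rightarrow> (nat \<times> nat) set \<Rightarrow> bool" where
  "disjoint_ER_col_family d H P \<longleftrightarrow>
     (\<forall>p\<in>P. ER_cols d H (fst p) (snd p)) \<and>
     (\<forall>p\<in>P. \<forall>r\<in>P. p \<noteq> r \<longrightarrow> {fst p, snd p} \<inter> {fst r, snd r} = {})"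

definition eta_c :: "nat \<Rightarrow> cmat \<Rightarrow> nat" where
  "eta_c d H = Max {card P | P. disjoint_ER_col_family d H P}"

definition eta_cbar :: "nat \<Rightarrow> cmat \<Rightarrow> nat" where
  "eta_cbar d H = Max {card P | P. disjoint_ER_col_family d H P \<and>
                         (\<forall>p\<in>P. \<forall>r\<in>P. aligned_cols d H p r)}"

definition eta_r :: "nat \<Rightarrow> cmat \<Rightarrow> nat" where
  "eta_r d H = eta_c d (transp_mat H)"

definition eta_rbar :: "nat \<Rightarrow> cmat \<Rightarrow> nat" where
  "eta_rbar d H = eta_cbar d (transp_mat H)"

end

theory Submission
  imports Defs
begin

text \<open>If \<open>H\<^sub>2 = D\<^sub>1 P\<^sub>1 H\<^sub>1 P\<^sub>2 D\<^sub>2\<close>, then the vector \<open>conj(column a) \<cdot> column b\<close> of \<open>H\<^sub>2\<close>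
  is the corresponding vector of \<open>H\<^sub>1\<close> (for the columns permuted by \<open>P\<^sub>2\<close>), with its entries
  permuted by \<open>P\<^sub>1\<close> and multiplied by a unimodular scalar \<open>s\<close> coming from \<open>D\<^sub>2\<close>; \<open>D\<^sub>1\<close> cancels.
  Since \<open>H\<^sub>1\<close> has a first row of ones, evaluating at the row that \<open>P\<^sub>1\<close> sends to row 0 pins
  \<open>s\<close> down: it is \<open>\<plusminus>1\<close> for ER pairs, and the same for aligned pairs. So the column
  permutation maps (aligned) disjoint ER families of \<open>H\<^sub>2\<close> injectively to those of \<open>H\<^sub>1\<close>, and
  by symmetry of the equivalence the sets of their sizes coincide; transposing handles rows.\<close>

definition col_cnj_prod :: "cmat \<Rightarrow> nat \<Rightarrow> nat \<Rightarrow> nat \<Rightarrow> complex" where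
  "col_cnj_prod H a b k = cnj (H k a) * H k b"

definition equiv_by :: "nat \<Rightarrow> (nat \<Rightarrow> complex) \<Rightarrow> (nat \<Rightarrow> complex) \<Rightarrow> (nat \<Rightarrow> nat) \<Rightarrow> (nat \<Rightarrow> nat)
    \<Rightarrow> cmat \<Rightarrow> cmat \<Rightarrow> bool" where
  "equiv_by d u v p q H1 H2 \<longleftrightarrow>
     (\<forall>i<d. cmod (u i) = 1) \<and> (\<forall>j<d. cmod (v j) = 1) \<and>
     p permutes {..<d} \<and> q permutes {..<d} \<and>
     (\<forall>i<d. \<forall>j<d. H2 i j = u i * H1 (p i) (q j) * v j)"

lemma hadamard_equiv_iff_equiv_by:
  "hadamard_equiv d H1 H2 \<longleftrightarrow> (\<exists>u v p q. equiv_by d u v p q H1 H2)"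
  unfolding hadamard_equiv_def equiv_by_def by blast

lemma cnj_mult_self_unimodular: "cmod z = 1 \<Longrightarrow> cnj z * z = 1"
  by (metis complex_norm_square mult.commute of_real_1 power_one)

lemma equiv_by_sym:
  assumes "equiv_by d u v p q H1 H2"
  shows "equiv_by d (\<lambda>i. cnj (u (inv p i))) (\<lambda>j. cnj (v (inv q j))) (inv p) (inv q) H2 H1"
proof -
  have u: "\<forall>i<d. cmod (u i) = 1" and v: "\<forall>j<d. cmod (v j) = 1"
    and p: "p permutes {..<d}" and q: "q permutes {..<d}"
    and H2: "\<forall>i<d. \<forall>j<d. H2 i j = u i * H1 (p i) (q j) * v j"
    using assms unfolding equiv_by_def by auto
  have inv_lt: "inv p i < d" "inv q j < d" if "i < d" "j < d" for i j
    using that permutes_in_image[OF permutes_inv[OF p]] permutes_in_image[OF permutes_inv[OF q]]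
    by auto
  have "H1 i j = cnj (u (inv p i)) * H2 (inv p i) (inv q j) * cnj (v (inv q j))"
    if "i < d" "j < d" for i j
  proof -
    have unit: "cnj (u (inv p i)) * u (inv p i) = 1" "cnj (v (inv q j)) * v (inv q j) = 1"
      using u v inv_lt[OF that] cnj_mult_self_unimodular by auto
    have "H2 (inv p i) (inv q j) = u (inv p i) * H1 i j * v (inv q j)"
      using H2 inv_lt[OF that] permutes_inverses(1)[OF p] permutes_inverses(1)[OF q] by simp
    then have "cnj (u (inv p i)) * H2 (inv p i) (inv q j) * cnj (v (inv q j))
        = (cnj (u (inv p i)) * u (inv p i)) * (cnj (v (inv q j)) * v (inv q j)) * H1 i j"
      by (simp add: algebra_simps)
    then show ?thesis
      using unit by simp
  qed
  then show ?thesis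
    unfolding equiv_by_def using u v inv_lt permutes_inv[OF p] permutes_inv[OF q] by auto
qed

lemma equiv_by_transp:
  "equiv_by d u v p q H1 H2 \<Longrightarrow> equiv_by d v u q p (transp_mat H1) (transp_mat H2)"
  unfolding equiv_by_def transp_mat_def by (simp add: mult.commute mult.left_commute)

lemma col_cnj_prod_equiv_by:
  assumes "equiv_by d u v p q H1 H2" "k < d" "a < d" "b < d"
  shows "col_cnj_prod H2 a b k = cnj (v a) * v b * col_cnj_prod H1 (q a) (q b) (p k)"
proof -
  have "cnj (u k) * u k = 1"
    using assms cnj_mult_self_unimodular unfolding equiv_by_def by blast
  then show ?thesis
    using assms unfolding equiv_by_def col_cnj_prod_def by (simp add: algebra_simps)
qed

lemma col_cnj_prod_equiv_by_row_of_ones: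
  assumes E: "equiv_by d u v p q H1 H2" and ones: "\<forall>j<d. H1 0 j = 1"
    and "a < d" "b < d"
  shows "inv p 0 < d" and "col_cnj_prod H2 a b (inv p 0) = cnj (v a) * v b"
proof -
  have p: "p permutes {..<d}" and q: "q permutes {..<d}"
    using E unfolding equiv_by_def by auto
  show "inv p 0 < d"
    using assms permutes_in_image[OF permutes_inv[OF p]] by auto
  moreover have "q a < d" "q b < d"
    using assms permutes_in_image[OF q] by auto
  ultimately show "col_cnj_prod H2 a b (inv p 0) = cnj (v a) * v b"
    using col_cnj_prod_equiv_by[OF E] ones assms permutes_inverses(1)[OF p]
    by (simp add: col_cnj_prod_def)
qed

lemma ER_cols_equiv_by:
  assumes E: "equiv_by d u v p q H1 H2" and ones: "\<forall>j<d. H1 0 j = 1"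
    and ER: "ER_cols d H2 a b"
  shows "ER_cols d H1 (q a) (q b)"
proof -
  have p: "p permutes {..<d}" and q: "q permutes {..<d}"
    using E unfolding equiv_by_def by auto
  have ab: "a < d" "b < d" "a \<noteq> b" and pm1: "\<forall>k<d. col_cnj_prod H2 a b k \<in> {1, -1}"
    using ER unfolding ER_cols_def col_cnj_prod_def by auto
  define s where "s = cnj (v a) * v b"
  have sign: "s \<in> {1, -1}"
    using pm1 col_cnj_prod_equiv_by_row_of_ones[OF E ones ab(1,2)] unfolding s_def by metis
  then have s: "s * s = 1"
    by auto
  have "col_cnj_prod H1 (q a) (q b) j \<in> {1, -1}" if j: "j < d" for j
  proof -
    have k: "inv p j < d" "p (inv p j) = j"
      using j permutes_in_image[OF permutes_inv[OF p]] permutes_inverses(1)[OF p] by auto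
    have "col_cnj_prod H1 (q a) (q b) j = s * col_cnj_prod H2 a b (inv p j)"
      using col_cnj_prod_equiv_by[OF E k(1) ab(1,2)] k s unfolding s_def
      by (metis mult.assoc mult_1)
    then show ?thesis
      using pm1 k(1) sign by auto
  qed
  moreover have "q a < d" "q b < d" "q a \<noteq> q b"
    using ab permutes_in_image[OF q] permutes_inj[OF q] by (auto dest: injD)
  ultimately show ?thesis
    unfolding ER_cols_def col_cnj_prod_def by blast
qed

lemma aligned_cols_equiv_by:
  assumes E: "equiv_by d u v p q H1 H2" and ones: "\<forall>j<d. H1 0 j = 1"
    and lt: "a < d" "b < d" "a' < d" "b' < d"
    and al: "aligned_cols d H2 (a, b) (a', b')"
  shows "aligned_cols d H1 (q a, q b) (q a', q b')"
proof -
  have p: "p permutes {..<d}" and v: "\<forall>j<d. cmod (v j) = 1"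
    using E unfolding equiv_by_def by auto
  have eq: "\<forall>k<d. col_cnj_prod H2 a b k = col_cnj_prod H2 a' b' k"
    using al unfolding aligned_cols_def col_cnj_prod_def by simp
  have same_scalar: "cnj (v a) * v b = cnj (v a') * v b'"
    using eq col_cnj_prod_equiv_by_row_of_ones[OF E ones lt(1,2)]
      col_cnj_prod_equiv_by_row_of_ones[OF E ones lt(3,4)] by metis
  have nonzero: "cnj (v a) * v b \<noteq> 0"
    using v lt by (metis complex_cnj_zero_iff mult_eq_0_iff norm_zero zero_neq_one)
  have "col_cnj_prod H1 (q a) (q b) j = col_cnj_prod H1 (q a') (q b') j" if j: "j < d" for j
  proof -
    have k: "inv p j < d" "p (inv p j) = j"
      using j permutes_in_image[OF permutes_inv[OF p]] permutes_inverses(1)[OF p] by auto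
    show ?thesis
      using eq k col_cnj_prod_equiv_by[OF E k(1) lt(1,2)] col_cnj_prod_equiv_by[OF E k(1) lt(3,4)]
        same_scalar nonzero by simp
  qed
  then show ?thesis
    unfolding aligned_cols_def col_cnj_prod_def by simp
qed

lemma disjoint_ER_col_family_equiv_by:
  assumes E: "equiv_by d u v p q H1 H2" and ones: "\<forall>j<d. H1 0 j = 1"
    and fam: "disjoint_ER_col_family d H2 P"
  shows "disjoint_ER_col_family d H1 (map_prod q q ` P)"
proof -
  have "inj q"
    using E permutes_inj unfolding equiv_by_def by blast
  then have disj: "{q a, q b} \<inter> {q a', q b'} = {}" if "{a, b} \<inter> {a', b'} = {}" for a b a' b'
    using that by (auto dest: injD)
  have "\<forall>x\<in>P. ER_cols d H1 (q (fst x)) (q (snd x))"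
    using fam ER_cols_equiv_by[OF E ones] unfolding disjoint_ER_col_family_def by blast
  moreover have "{q (fst x), q (snd x)} \<inter> {q (fst y), q (snd y)} = {}"
    if "x \<in> P" "y \<in> P" "map_prod q q x \<noteq> map_prod q q y" for x y
    using fam that disj unfolding disjoint_ER_col_family_def by (metis map_prod_def)
  ultimately show ?thesis
    unfolding disjoint_ER_col_family_def by auto
qed

lemma aligned_ER_col_family_equiv_by:
  assumes E: "equiv_by d u v p q H1 H2" and ones: "\<forall>j<d. H1 0 j = 1"
    and fam: "disjoint_ER_col_family d H2 P" and al: "\<forall>x\<in>P. \<forall>y\<in>P. aligned_cols d H2 x y"
  shows "\<forall>x\<in>map_prod q q ` P. \<forall>y\<in>map_prod q q ` P. aligned_cols d H1 x y"
proof (intro ballI)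
  fix x y assume "x \<in> map_prod q q ` P" "y \<in> map_prod q q ` P"
  then obtain a b a' b' where xy: "x = (q a, q b)" "y = (q a', q b')" "(a, b) \<in> P" "(a', b') \<in> P"
    by auto
  then have "ER_cols d H2 a b" "ER_cols d H2 a' b'"
    using fam unfolding disjoint_ER_col_family_def by force+
  then have "a < d" "b < d" "a' < d" "b' < d"
    unfolding ER_cols_def by blast+
  then show "aligned_cols d H1 x y"
    using al xy aligned_cols_equiv_by[OF E ones] by blast
qed

lemma ER_col_family_cards_equiv_by:
  assumes E: "equiv_by d u v p q H1 H2" and ones: "\<forall>j<d. H1 0 j = 1"
  shows "{card P | P. disjoint_ER_col_family d H2 P} \<subseteq> {card P | P. disjoint_ER_col_family d H1 P}"
    and "{card P | P. disjoint_ER_col_family d H2 P \<and> (\<forall>x\<in>P. \<forall>y\<in>P. aligned_cols d H2 x y)}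
      \<subseteq> {card P | P. disjoint_ER_col_family d H1 P \<and> (\<forall>x\<in>P. \<forall>y\<in>P. aligned_cols d H1 x y)}"
proof -
  have "inj q"
    using E permutes_inj unfolding equiv_by_def by blast
  then have "inj (map_prod q q)"
    by (auto simp: inj_def)
  then have card_eq: "card (map_prod q q ` P) = card P" for P
    using card_image inj_on_subset by blast
  show "{card P | P. disjoint_ER_col_family d H2 P} \<subseteq> {card P | P. disjoint_ER_col_family d H1 P}"
  proof clarify
    fix P assume "disjoint_ER_col_family d H2 P"
    then show "\<exists>P'. card P = card P' \<and> disjoint_ER_col_family d H1 P'"
      using disjoint_ER_col_family_equiv_by[OF E ones] card_eq by metis
  qed
  show "{card P | P. disjoint_ER_col_family d H2 P \<and> (\<forall>x\<in>P. \<forall>y\<in>P. aligned_cols d H2 x y)}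
      \<subseteq> {card P | P. disjoint_ER_col_family d H1 P \<and> (\<forall>x\<in>P. \<forall>y\<in>P. aligned_cols d H1 x y)}"
  proof clarify
    fix P assume "disjoint_ER_col_family d H2 P" "\<forall>x\<in>P. \<forall>y\<in>P. aligned_cols d H2 x y"
    then show "\<exists>P'. card P = card P' \<and> disjoint_ER_col_family d H1 P' \<and>
        (\<forall>x\<in>P'. \<forall>y\<in>P'. aligned_cols d H1 x y)"
      using disjoint_ER_col_family_equiv_by[OF E ones] aligned_ER_col_family_equiv_by[OF E ones]
        card_eq by metis
  qed
qed

lemma eta_c_eta_cbar_equiv_by:
  assumes E: "equiv_by d u v p q H1 H2"
    and ones1: "\<forall>j<d. H1 0 j = 1" and ones2: "\<forall>j<d. H2 0 j = 1"
  shows "eta_c d H1 = eta_c d H2 \<and> eta_cbar d H1 = eta_cbar d H2"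
  using ER_col_family_cards_equiv_by[OF E ones1] ER_col_family_cards_equiv_by[OF equiv_by_sym[OF E] ones2]
  unfolding eta_c_def eta_cbar_def by (intro conjI arg_cong[where f = Max] subset_antisym)

theorem corollary3:
  fixes d :: nat and H H' :: cmat
  assumes "complex_hadamard d H" and "dephased d H"
      and "complex_hadamard d H'" and "dephased d H'"
      and "hadamard_equiv d H H'"
  shows "eta_c d H = eta_c d H' \<and> eta_r d H = eta_r d H' \<and>
         eta_cbar d H = eta_cbar d H' \<and> eta_rbar d H = eta_rbar d H'"
proof -
  obtain u v p q where E: "equiv_by d u v p q H H'"
    using assms(5) hadamard_equiv_iff_equiv_by by blast
  have "eta_c d H = eta_c d H' \<and> eta_cbar d H = eta_cbar d H'"
    using eta_c_eta_cbar_equiv_by[OF E] assms(2,4) unfolding dephased_def by blast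
  moreover have "eta_c d (transp_mat H) = eta_c d (transp_mat H') \<and>
      eta_cbar d (transp_mat H) = eta_cbar d (transp_mat H')"
    using eta_c_eta_cbar_equiv_by[OF equiv_by_transp[OF E]] assms(2,4)
    unfolding dephased_def transp_mat_def by blast
  ultimately show ?thesis
    unfolding eta_r_def eta_rbar_def by blast
qed

end
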